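(* Let $0<\theta<\frac{\pi}{4}$ and let $N\ge 2$ be an integer. Let $|\psi_{\mathrm{GGHZ}}\rangle=\cos\theta|000\rangle+\sin\theta|111\rangle$ and $|\psi_{\mathrm{GHZ}}\rangle=\frac{1}{\sqrt2}(|000\rangle+|111\rangle)$ be three-qubit states on $\mathcal H_A\otimes\mathcal H_B\otimes\mathcal H_C$. For $x\in\{0,1,2\}$ and $a\in\{0,1\}$ let $P_{a|x}$ be the projector onto the eigenvector of $\sigma_x$ (if $x=0$), $\sigma_y$ (if $x=1$), $\sigma_z$ (if $x=2$) with eigenvalue $(-1)^a$. Define the assemblages on Charlie $$\sigma^{\mathrm{GGHZ}}_{a,b|x,y}=\mathrm{Tr}_{AB}\big[(P_{a|x}\otimes P_{b|y}\otimes\mathbb 1)|\psi_{\mathrm{GGHZ}}\rangle\langle\psi_{\mathrm{GGHZ}}|\big],\quad \sigma^{\mathrm{GHZ}}_{a,b|x,y}=\mathrm{Tr}_{AB}\big[(P_{a|x}\otimes P_{b|y}\otimes\mathbb 1)|\psi_{\mathrm{GHZ}}\rangle\langle\psi_{\mathrm{GHZ}}|\big]$$ for $a,b\in\{0,1\}$, $x,y\in\{0,1,2\}$. Let $P_{\mathrm{fail}}=(1-2\sin^2\theta)^{N-1}$, $P_{\mathrm{success}}=1-P_{\mathrm{fail}}$, and $\sigma^{\mathrm{dist}}_{a,b|x,y}=P_{\mathrm{success}}\,\sigma^{\mathrm{GHZ}}_{a,b|x,y}+P_{\mathrm{fail}}\,\sigma^{\mathrm{GGHZ}}_{a,b|x,y}$,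 the assemblage obtained on average from $N$ copies of $\{\sigma^{\mathrm{GGHZ}}_{a,b|x,y}\}$ by the distillation protocol described in the context. Then $$\mathcal F_A\big(\{\sigma^{\mathrm{dist}}_{a,b|x,y}\},\{\sigma^{\mathrm{GHZ}}_{a,b|x,y}\}\big)=\sqrt{1-\tfrac12(1-\sin2\theta)(\cos2\theta)^{N-1}}.$$
   Context: $\sigma_x,\sigma_y,\sigma_z$ are the Pauli matrices in the computational basis. For positive semidefinite $A,B$, $\mathcal F(A,B)=\mathrm{Tr}\big[\sqrt{\sqrt A B\sqrt A}\big]$. For two-sided assemblages $\{\sigma_{a,b|x,y}\}$, $\{\tau_{a,b|x,y}\}$ the assemblage fidelity is $\mathcal F_A=\min_{x,y}\sum_{a,b}\mathcal F(\sigma_{a,b|x,y},\tau_{a,b|x,y})$ (components of zero trace contribute $0$). Distillation protocol (two-sided device-independent setting: Alice and Bob untrusted, Charlie trusted): on each of the first $N-1$ copies Charlie applies the filter with Kraus operators $K_0=\mathrm{diag}(\tan\theta,1)$, $K_1=\mathrm{diag}(\sqrt{1-\tan^2\theta},0)$; outcome $0$ (probability $2\sin^2\theta$ per copy) turns the copy into $\{\sigma^{\mathrm{GHZ}}_{a,b|x,y}\}$; copies with outcome $1$ are discarded and if all fail the untouched $N$-th copy is kept, so the average output is the convex combination $\sigma^{\mathrm{dist}}$ of the claim. *)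

theory Defs
  imports Complex_Main "Jordan_Normal_Form.Matrix"
begin

definition adj :: "complex mat \<Rightarrow> complex mat" where
  "adj A = mat (dim_col A) (dim_row A) (\<lambda>(i,j). cnj (A $$ (j,i)))"

definition mtrace :: "complex mat \<Rightarrow> complex" where
  "mtrace A = (\<Sum>i<dim_row A. A $$ (i,i))"

definition psd :: "complex mat \<Rightarrow> bool" where
  "psd A \<longleftrightarrow> A \<in> carrier_mat (dim_row A) (dim_row A) \<and> adj A = A \<and>
     (\<forall>v \<in> carrier_vec (dim_row A).
        Im (\<Sum>i<dim_row A. cnj (v $ i) * (A *\<^sub>v v) $ i) = 0 \<and>
        Re (\<Sum>i<dim_row A. cnj (v $ i) * (A *\<^sub>v v) $ i) \<ge> 0)"

definition msqrt :: "complex mat \<Rightarrow> complex mat" where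
  "msqrt A = (THE S. psd S \<and> dim_row S = dim_row A \<and> S * S = A)"

definition fidelity :: "complex mat \<Rightarrow> complex mat \<Rightarrow> real" where
  "fidelity A B = Re (mtrace (msqrt (msqrt A * B * msqrt A)))"

definition pauli :: "nat \<Rightarrow> complex mat" where
  "pauli x = (if x = 0 then mat_of_rows_list 2 [[0, 1], [1, 0]]
              else if x = 1 then mat_of_rows_list 2 [[0, -\<i>], [\<i>, 0]]
              else mat_of_rows_list 2 [[1, 0], [0, -1]])"

definition proj :: "nat \<Rightarrow> nat \<Rightarrow> complex mat" where
  "proj a x = (let v = (SOME v. v \<in> carrier_vec 2 \<and> (\<Sum>i<2. cmod (v $ i) ^ 2) = 1 \<and>
                                pauli x *\<^sub>v v = ((-1) ^ a) \<cdot>\<^sub>v v)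
               in mat 2 2 (\<lambda>(i,j). v $ i * cnj (v $ j)))"

type_synonym ket3 = "nat \<Rightarrow> nat \<Rightarrow> nat \<Rightarrow> complex"
type_synonym op3 = "nat \<Rightarrow> nat \<Rightarrow> nat \<Rightarrow> nat \<Rightarrow> nat \<Rightarrow> nat \<Rightarrow> complex"
  \<comment> \<open>matrix entry <i j k| O |i' j' k'> written O i j k i' j' k'\<close>

definition ket_gghz :: "real \<Rightarrow> ket3" where
  "ket_gghz \<theta> i j k = (if i = 0 \<and> j = 0 \<and> k = 0 then complex_of_real (cos \<theta>)
                       else if i = 1 \<and> j = 1 \<and> k = 1 then complex_of_real (sin \<theta>) else 0)"

definition ket_ghz :: "ket3" where
  "ket_ghz i j k = (if (i = 0 \<and> j = 0 \<and> k = 0) \<or> (i = 1 \<and> j = 1 \<and> k = 1)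
                    then complex_of_real (1 / sqrt 2) else 0)"

definition dens3 :: "ket3 \<Rightarrow> op3" where
  "dens3 \<psi> i j k i' j' k' = \<psi> i j k * cnj (\<psi> i' j' k')"

definition tensor3 :: "complex mat \<Rightarrow> complex mat \<Rightarrow> complex mat \<Rightarrow> op3" where
  "tensor3 P Q R i j k i' j' k' = P $$ (i,i') * Q $$ (j,j') * R $$ (k,k')"

definition mult3 :: "op3 \<Rightarrow> op3 \<Rightarrow> op3" where
  "mult3 M1 M2 i j k i' j' k' =
     (\<Sum>p<2. \<Sum>q<2. \<Sum>r<2. M1 i j k p q r * M2 p q r i' j' k')"

definition ptrace_AB :: "op3 \<Rightarrow> complex mat" where
  "ptrace_AB M = mat 2 2 (\<lambda>(k,l). \<Sum>i<2. \<Sum>j<2. M i j k i j l)"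

definition assemblage :: "ket3 \<Rightarrow> nat \<Rightarrow> nat \<Rightarrow> nat \<Rightarrow> nat \<Rightarrow> complex mat" where
  "assemblage \<psi> a b x y =
     ptrace_AB (mult3 (tensor3 (proj a x) (proj b y) (1\<^sub>m 2)) (dens3 \<psi>))"

definition comp_fid :: "complex mat \<Rightarrow> complex mat \<Rightarrow> real" where
  "comp_fid A B = (if mtrace A = 0 \<or> mtrace B = 0 then 0 else fidelity A B)"

definition assemblage_fidelity ::
  "(nat \<Rightarrow> nat \<Rightarrow> nat \<Rightarrow> nat \<Rightarrow> complex mat) \<Rightarrow> (nat \<Rightarrow> nat \<Rightarrow> nat \<Rightarrow> nat \<Rightarrow> complex mat) \<Rightarrow> real" where
  "assemblage_fidelity \<sigma> \<tau> =
     Min ((\<lambda>(x,y). \<Sum>a<2. \<Sum>b<2. comp_fid (\<sigma> a b x y) (\<tau> a b x y)) ` ({..<3} \<times> {..<3}))"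

definition P_fail :: "real \<Rightarrow> nat \<Rightarrow> real" where
  "P_fail \<theta> N = (1 - 2 * (sin \<theta>)\<^sup>2) ^ (N - 1)"

definition P_success :: "real \<Rightarrow> nat \<Rightarrow> real" where
  "P_success \<theta> N = 1 - P_fail \<theta> N"

definition sigma_dist :: "real \<Rightarrow> nat \<Rightarrow> nat \<Rightarrow> nat \<Rightarrow> nat \<Rightarrow> nat \<Rightarrow> complex mat" where
  "sigma_dist \<theta> N a b x y =
     complex_of_real (P_success \<theta> N) \<cdot>\<^sub>m assemblage ket_ghz a b x y
     + complex_of_real (P_fail \<theta> N) \<cdot>\<^sub>m assemblage (ket_gghz \<theta>) a b x y"

end

theory Submission
  imports Defs
begin

(* All assemblage elements are 2 x 2 positive matrices on Charlie's qubit, and for these everything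
   is explicit: the positive square root of M is (M + sqrt(det M) I) / sqrt(tr M + 2 sqrt(det M)),
   whence F(A,B)^2 = tr(AB) + 2 sqrt(det A det B).  The projectors are P_{a|x} = (1 + (-1)^a sigma_x)/2,
   so every GHZ component has rank one and its fidelity with the distilled component is
   sqrt(tr(sigma^dist tau)).  With rho_000, rho_111, rho_coh the |000>, |111> and coherence entries
   of P_success |GHZ><GHZ| + P_fail |GGHZ><GGHZ|, the summed component fidelities of a setting (x,y)
   are sqrt((rho_000 + rho_111 + 2 rho_coh)/2) if neither party measures sigma_z, and
   sqrt(rho_000/2) + sqrt(rho_111/2) otherwise.  As rho_coh^2 <= rho_000 rho_111, the first value is
   the minimum, and it equals the claimed expression. *)

definition mat2 :: "complex \<Rightarrow> complex \<Rightarrow> complex \<Rightarrow> complex \<Rightarrow> complex mat" where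
  "mat2 p q r s = mat 2 2 (\<lambda>(i,j). if i = 0 then (if j = 0 then p else q) else (if j = 0 then r else s))"

lemma less_2_iff: "(i::nat) < 2 \<longleftrightarrow> i = 0 \<or> i = 1"
  by auto

lemma sum_lessThan_2: "(\<Sum>i<2. f i) = f 0 + f (1::nat)"
  by (simp add: numeral_2_eq_2)

lemma mat2_carrier [simp]:
  "mat2 p q r s \<in> carrier_mat 2 2" "dim_row (mat2 p q r s) = 2" "dim_col (mat2 p q r s) = 2"
  by (auto simp: mat2_def)

lemma index_mat2 [simp]:
  "mat2 p q r s $$ (0,0) = p" "mat2 p q r s $$ (0,1) = q"
  "mat2 p q r s $$ (1,0) = r" "mat2 p q r s $$ (1,1) = s"
  "mat2 p q r s $$ (0,Suc 0) = q" "mat2 p q r s $$ (Suc 0,0) = r" "mat2 p q r s $$ (Suc 0,Suc 0) = s"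
  by (auto simp: mat2_def)

lemma mat2_eta: "A \<in> carrier_mat 2 2 \<Longrightarrow> A = mat2 (A$$(0,0)) (A$$(0,1)) (A$$(1,0)) (A$$(1,1))"
  by (rule eq_matI) (auto simp: mat2_def less_2_iff)

lemma mat2_eq_iff: "mat2 p q r s = mat2 p' q' r' s' \<longleftrightarrow> p = p' \<and> q = q' \<and> r = r' \<and> s = s'"
  by (metis index_mat2(1-4))

lemma mat2_mult:
  "mat2 p q r s * mat2 p' q' r' s' = mat2 (p*p' + q*r') (p*q' + q*s') (r*p' + s*r') (r*q' + s*s')"
  by (rule eq_matI) (auto simp: less_2_iff scalar_prod_def row_def col_def atLeast0LessThan sum_lessThan_2)

lemma mat2_add: "mat2 p q r s + mat2 p' q' r' s' = mat2 (p+p') (q+q') (r+r') (s+s')"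
  by (rule eq_matI) (auto simp: less_2_iff)

lemma smult_mat2: "c \<cdot>\<^sub>m mat2 p q r s = mat2 (c*p) (c*q) (c*r) (c*s)"
  by (rule eq_matI) (auto simp: less_2_iff)

lemma mtrace_mat2: "mtrace (mat2 p q r s) = p + s"
  by (simp add: mtrace_def sum_lessThan_2)

lemma adj_mat2: "adj (mat2 p q r s) = mat2 (cnj p) (cnj r) (cnj q) (cnj s)"
  by (rule eq_matI) (auto simp: adj_def less_2_iff)

definition vec2 :: "complex \<Rightarrow> complex \<Rightarrow> complex vec" where
  "vec2 x y = vec 2 (\<lambda>i. if i = 0 then x else y)"

lemma vec2_simps [simp]:
  "vec2 x y \<in> carrier_vec 2" "vec2 x y $ 0 = x" "vec2 x y $ 1 = y" "vec2 x y $ Suc 0 = y"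
  by (auto simp: vec2_def)

lemma vec2_eq_iff: "vec2 x y = vec2 x' y' \<longleftrightarrow> x = x' \<and> y = y'"
  by (metis vec2_simps(2,3))

lemma vec2_eta: "v \<in> carrier_vec 2 \<Longrightarrow> v = vec2 (v$0) (v$1)"
  by (rule eq_vecI) (auto simp: vec2_def less_2_iff)

lemma smult_vec2: "c \<cdot>\<^sub>v vec2 x y = vec2 (c * x) (c * y)"
  by (rule eq_vecI) (auto simp: vec2_def)

lemma mat2_mult_vec2: "mat2 p q r s *\<^sub>v vec2 x y = vec2 (p * x + q * y) (r * x + s * y)"
  by (rule eq_vecI)
     (auto simp: vec2_def scalar_prod_def row_def atLeast0LessThan sum_lessThan_2 less_2_iff)

lemma mtrace_mult_commute:
  assumes "A \<in> carrier_mat n m" "B \<in> carrier_mat m n"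
  shows "mtrace (A * B) = mtrace (B * A)"
proof -
  have "mtrace (A * B) = (\<Sum>i<n. \<Sum>k<m. A $$ (i,k) * B $$ (k,i))"
    using assms by (simp add: mtrace_def scalar_prod_def atLeast0LessThan)
  also have "\<dots> = (\<Sum>k<m. \<Sum>i<n. B $$ (k,i) * A $$ (i,k))"
    by (subst sum.swap) (simp add: mult.commute)
  also have "\<dots> = mtrace (B * A)"
    using assms by (simp add: mtrace_def scalar_prod_def atLeast0LessThan)
  finally show ?thesis .
qed

definition det2 :: "complex mat \<Rightarrow> complex" where
  "det2 A = A$$(0,0) * A$$(1,1) - A$$(0,1) * A$$(1,0)"

lemma det2_mat2: "det2 (mat2 p q r s) = p * s - q * r"
  by (simp add: det2_def)

lemma det2_mult:
  assumes "A \<in> carrier_mat 2 2" "B \<in> carrier_mat 2 2"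
  shows "det2 (A * B) = det2 A * det2 B"
proof -
  have "det2 (mat2 p q r s * mat2 p' q' r' s') = det2 (mat2 p q r s) * det2 (mat2 p' q' r' s')"
    for p q r s p' q' r' s'
    by (simp add: mat2_mult det2_mat2 algebra_simps)
  then show ?thesis
    using mat2_eta[OF assms(1)] mat2_eta[OF assms(2)] by metis
qed

definition herm2 :: "real \<Rightarrow> real \<Rightarrow> complex \<Rightarrow> complex mat" where
  "herm2 a d q = mat2 (of_real a) q (cnj q) (of_real d)"

lemma herm2_carrier [simp]: "herm2 a d q \<in> carrier_mat 2 2" "dim_row (herm2 a d q) = 2"
  by (simp_all add: herm2_def)

lemma herm2_eq_iff: "herm2 a d q = herm2 a' d' q' \<longleftrightarrow> a = a' \<and> d = d' \<and> q = q'"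
  by (auto simp: herm2_def mat2_eq_iff)

lemma herm2_add: "herm2 a d q + herm2 a' d' q' = herm2 (a + a') (d + d') (q + q')"
  by (simp add: herm2_def mat2_add)

lemma smult_herm2: "of_real c \<cdot>\<^sub>m herm2 a d q = herm2 (c * a) (c * d) (of_real c * q)"
  by (simp add: herm2_def smult_mat2)

lemma mtrace_herm2: "mtrace (herm2 a d q) = of_real (a + d)"
  by (simp add: herm2_def mtrace_mat2)

lemma det2_herm2: "det2 (herm2 a d q) = of_real (a * d - (cmod q)^2)"
  by (simp add: herm2_def det2_mat2 flip: complex_norm_square)

lemma herm2_square:
  "herm2 x z y * herm2 x z y = herm2 (x^2 + (cmod y)^2) (z^2 + (cmod y)^2) (of_real (x + z) * y)"
  by (simp add: herm2_def mat2_mult mat2_eq_iff complex_eq_iff cmod_power2)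
     (simp add: power2_eq_square algebra_simps)

lemma mtrace_herm2_mult:
  "mtrace (herm2 a d q * herm2 a' d' q') = of_real (a * a' + d * d' + 2 * Re (q * cnj q'))"
  by (simp add: herm2_def mat2_mult mtrace_mat2 complex_eq_iff)

lemma herm2_mult_vec2: "herm2 a d q *\<^sub>v vec2 x y = vec2 (of_real a * x + q * y) (cnj q * x + of_real d * y)"
  by (simp add: herm2_def mat2_mult_vec2)

lemma hermitian_dim2E:
  assumes "A \<in> carrier_mat 2 2" "adj A = A"
  obtains a d q where "A = herm2 a d q"
proof -
  obtain p q r s where A: "A = mat2 p q r s"
    using mat2_eta[OF assms(1)] by blast
  with assms(2) have "cnj p = p" "cnj q = r" "cnj s = s"
    by (simp_all add: adj_mat2 mat2_eq_iff)
  then have "A = herm2 (Re p) (Re s) q"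
    unfolding A herm2_def mat2_eq_iff by (simp add: complex_eq_iff)
  then show ?thesis
    by (rule that)
qed

definition herm2_qform :: "real \<Rightarrow> real \<Rightarrow> complex \<Rightarrow> complex \<Rightarrow> complex \<Rightarrow> real" where
  "herm2_qform a d q x y = a * (cmod x)^2 + d * (cmod y)^2 + 2 * Re (cnj x * q * y)"

lemma quadratic_form_herm2:
  "(\<Sum>i<2. cnj (vec2 x y $ i) * (herm2 a d q *\<^sub>v vec2 x y) $ i) = of_real (herm2_qform a d q x y)"
  by (simp add: herm2_mult_vec2 sum_lessThan_2 herm2_qform_def complex_eq_iff cmod_power2)
     (simp add: algebra_simps power2_eq_square)

lemma herm2_qform_nonneg:
  assumes "0 \<le> a" "0 \<le> d" "(cmod q)^2 \<le> a * d"
  shows "0 \<le> herm2_qform a d q x y"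
proof -
  define u v where "u = sqrt a * cmod x" and "v = sqrt d * cmod y"
  have "- Re (cnj x * q * y) \<le> cmod (cnj x * q * y)"
    by (metis abs_Re_le_cmod abs_le_iff)
  also have "\<dots> = cmod x * cmod q * cmod y"
    by (simp add: norm_mult)
  also have "\<dots> \<le> cmod x * sqrt (a * d) * cmod y"
    using assms by (intro mult_right_mono mult_left_mono) (auto simp: real_le_rsqrt)
  also have "\<dots> = u * v"
    by (simp add: u_def v_def real_sqrt_mult)
  finally have "- Re (cnj x * q * y) \<le> u * v" .
  moreover have "2 * u * v \<le> u^2 + v^2"
    by (rule sum_squares_bound)
  moreover have "u^2 + v^2 = a * (cmod x)^2 + d * (cmod y)^2"
    using assms by (simp add: u_def v_def power_mult_distrib)
  ultimately show ?thesis
    unfolding herm2_qform_def by linarith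
qed

lemma herm2_qform_nonneg_imp:
  assumes form: "\<And>x y. 0 \<le> herm2_qform a d q x y"
  shows "(cmod q)^2 \<le> a * d"
proof -
  have scaled: "herm2_qform a d q (- of_real t * q) (of_real s) = a * t^2 * (cmod q)^2 + d * s^2 - 2 * t * s * (cmod q)^2"
    for t s
    by (simp add: herm2_qform_def norm_mult power_mult_distrib cmod_power2) (simp add: algebra_simps power2_eq_square)
  have "0 \<le> a"
    using form[of 1 0] by (simp add: herm2_qform_def)
  show ?thesis
  proof (cases "a = 0")
    case True
    then have "0 \<le> - 4 * (cmod q)^4"
      using form[of "- of_real (d + 1) * q" "of_real (2 * (cmod q)^2)"] unfolding scaled
      by (simp add: algebra_simps power2_eq_square power4_eq_xxxx)
    then show ?thesis
      using True by simp
  next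
    case False
    then have "0 \<le> a * (a * d - (cmod q)^2)"
      using form[of "- of_real 1 * q" "of_real a"] unfolding scaled by (simp add: algebra_simps power2_eq_square)
    then show ?thesis
      using False \<open>0 \<le> a\<close> by (simp add: zero_le_mult_iff)
  qed
qed

lemma psd_herm2_iff: "psd (herm2 a d q) \<longleftrightarrow> 0 \<le> a \<and> 0 \<le> d \<and> (cmod q)^2 \<le> a * d"
proof
  assume psd: "psd (herm2 a d q)"
  have form: "0 \<le> herm2_qform a d q x y" for x y
  proof -
    have "0 \<le> Re (\<Sum>i<2. cnj (vec2 x y $ i) * (herm2 a d q *\<^sub>v vec2 x y) $ i)"
      using psd vec2_simps(1) unfolding psd_def herm2_carrier(2) by blast
    then show ?thesis
      by (simp only: quadratic_form_herm2 Re_complex_of_real)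
  qed
  then show "0 \<le> a \<and> 0 \<le> d \<and> (cmod q)^2 \<le> a * d"
    using form[of 1 0] form[of 0 1] herm2_qform_nonneg_imp[OF form] by (simp add: herm2_qform_def)
next
  assume adq: "0 \<le> a \<and> 0 \<le> d \<and> (cmod q)^2 \<le> a * d"
  have "Im (\<Sum>i<2. cnj (v $ i) * (herm2 a d q *\<^sub>v v) $ i) = 0
      \<and> 0 \<le> Re (\<Sum>i<2. cnj (v $ i) * (herm2 a d q *\<^sub>v v) $ i)" if v: "v \<in> carrier_vec 2" for v
  proof -
    obtain x y where "v = vec2 x y"
      using vec2_eta[OF v] by blast
    then show ?thesis
      using adq herm2_qform_nonneg by (simp only: quadratic_form_herm2) simp
  qed
  moreover have "adj (herm2 a d q) = herm2 a d q"
    by (simp add: herm2_def adj_mat2)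
  ultimately show "psd (herm2 a d q)"
    unfolding psd_def herm2_carrier(2) using herm2_carrier(1) by blast
qed

lemma psd_dim2E:
  assumes "psd A" "dim_row A = 2"
  obtains a d q where "A = herm2 a d q" "0 \<le> a" "0 \<le> d" "(cmod q)^2 \<le> a * d"
proof -
  have "A \<in> carrier_mat 2 2" "adj A = A"
    using assms unfolding psd_def by metis+
  then obtain a d q where A: "A = herm2 a d q"
    by (rule hermitian_dim2E)
  with assms(1) show ?thesis
    using that psd_herm2_iff by blast
qed

(* Cayley-Hamilton: a positive square root S of M satisfies S^2 - (tr S) S + (det S) I = 0 with
   det S = sqrt(det M) and (tr S)^2 = tr M + 2 det S. *)
definition herm2_sqrt :: "real \<Rightarrow> real \<Rightarrow> complex \<Rightarrow> complex mat" where
  "herm2_sqrt a d q =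
     (let \<rho> = sqrt (a * d - (cmod q)^2); t = sqrt (a + d + 2 * \<rho>)
      in herm2 ((a + \<rho>) / t) ((d + \<rho>) / t) (q / of_real t))"

lemma herm2_sqrt_of_square:
  assumes "0 \<le> x" "0 \<le> z" "(cmod y)^2 \<le> x * z"
  shows "herm2_sqrt (x^2 + (cmod y)^2) (z^2 + (cmod y)^2) (of_real (x + z) * y) = herm2 x z y"
proof -
  have "cmod (of_real (x + z) * y) = (x + z) * cmod y"
    using assms by (simp add: norm_mult del: of_real_add)
  then have "(x^2 + (cmod y)^2) * (z^2 + (cmod y)^2) - (cmod (of_real (x + z) * y))^2
      = (x * z - (cmod y)^2)^2"
    by (simp add: power2_eq_square algebra_simps)
  then have \<rho>: "sqrt ((x^2 + (cmod y)^2) * (z^2 + (cmod y)^2) - (cmod (of_real (x + z) * y))^2)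
      = x * z - (cmod y)^2"
    using assms by simp
  have t: "sqrt (x^2 + (cmod y)^2 + (z^2 + (cmod y)^2) + 2 * (x * z - (cmod y)^2)) = x + z"
    using assms by (intro real_sqrt_unique) (auto simp: power2_eq_square algebra_simps)
  show ?thesis
  proof (cases "x + z = 0")
    case True
    with assms have "x = 0" "z = 0"
      by auto
    moreover from assms this have "y = 0"
      by simp
    ultimately show ?thesis
      by (simp add: herm2_sqrt_def)
  next
    case False
    then have "complex_of_real x + complex_of_real z \<noteq> 0"
      by (metis of_real_add of_real_eq_0_iff)
    with False show ?thesis
      unfolding herm2_sqrt_def Let_def \<rho> t herm2_eq_iff
      by (simp add: field_simps power2_eq_square)
  qed
qed

lemma psd_herm2_sqrt:
  assumes "psd (herm2 a d q)"
  shows "psd (herm2_sqrt a d q)"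
proof -
  define \<rho> where "\<rho> = sqrt (a * d - (cmod q)^2)"
  define t where "t = sqrt (a + d + 2 * \<rho>)"
  have a: "0 \<le> a" "0 \<le> d" "(cmod q)^2 \<le> a * d"
    using assms by (simp_all add: psd_herm2_iff)
  then have \<rho>: "0 \<le> \<rho>"
    by (simp add: \<rho>_def)
  have "(cmod (q / of_real t))^2 = (cmod q)^2 / t^2"
    by (simp add: norm_divide power_divide)
  also have "\<dots> \<le> (a + \<rho>) * (d + \<rho>) / t^2"
  proof (intro divide_right_mono)
    have "0 \<le> \<rho> * (a + d + \<rho>)"
      using a \<rho> by simp
    then show "(cmod q)^2 \<le> (a + \<rho>) * (d + \<rho>)"
      using a by (simp add: algebra_simps)
  qed simp
  finally show ?thesis
    unfolding herm2_sqrt_def Let_def \<rho>_def[symmetric] t_def[symmetric] psd_herm2_iff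
    using a \<rho> by (simp add: t_def power2_eq_square)
qed

lemma herm2_sqrt_square:
  assumes "psd (herm2 a d q)"
  shows "herm2_sqrt a d q * herm2_sqrt a d q = herm2 a d q"
proof -
  define \<rho> where "\<rho> = sqrt (a * d - (cmod q)^2)"
  define t where "t = sqrt (a + d + 2 * \<rho>)"
  have a: "0 \<le> a" "0 \<le> d" "(cmod q)^2 \<le> a * d"
    using assms by (simp_all add: psd_herm2_iff)
  then have \<rho>: "0 \<le> \<rho>" "\<rho>^2 = a * d - (cmod q)^2"
    by (simp_all add: \<rho>_def)
  have t: "0 \<le> t" "t^2 = a + d + 2 * \<rho>"
    using a \<rho> by (simp_all add: t_def)
  have S: "herm2_sqrt a d q = herm2 ((a + \<rho>) / t) ((d + \<rho>) / t) (q / of_real t)"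
    by (simp add: herm2_sqrt_def Let_def \<rho>_def t_def)
  show ?thesis
  proof (cases "t = 0")
    case True
    with a \<rho> t have "a = 0" "d = 0" "\<rho> = 0"
      by auto
    moreover from a this have "q = 0"
      by simp
    ultimately show ?thesis
      unfolding S by (simp add: herm2_square)
  next
    case False
    have frac: "((e + \<rho>) / t)^2 + (cmod (q / of_real t))^2 = ((e + \<rho>)^2 + (cmod q)^2) / t^2" for e
      using t(1) by (simp add: norm_divide power_divide flip: add_divide_distrib)
    have "(a + \<rho>)^2 + (cmod q)^2 = a * t^2" "(d + \<rho>)^2 + (cmod q)^2 = d * t^2"
      using \<rho> t by (simp_all add: power2_eq_square algebra_simps)
    then have "((a + \<rho>) / t)^2 + (cmod (q / of_real t))^2 = a"
      "((d + \<rho>) / t)^2 + (cmod (q / of_real t))^2 = d"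
      unfolding frac using False by simp_all
    moreover have "(a + \<rho>) / t + (d + \<rho>) / t = t^2 / t"
      unfolding t(2) using False by (simp add: field_simps)
    ultimately show ?thesis
      unfolding S herm2_square using False by (simp add: power2_eq_square)
  qed
qed

lemma psd_square_root_unique_dim2:
  assumes "psd S" "dim_row S = 2" "S * S = herm2 a d q"
  shows "S = herm2_sqrt a d q"
proof -
  obtain x z y where S: "S = herm2 x z y" and xzy: "0 \<le> x" "0 \<le> z" "(cmod y)^2 \<le> x * z"
    using psd_dim2E[OF assms(1,2)] by metis
  from assms(3) have "a = x^2 + (cmod y)^2" "d = z^2 + (cmod y)^2" "q = of_real (x + z) * y"
    unfolding S herm2_square herm2_eq_iff by simp_all
  then show ?thesis
    using herm2_sqrt_of_square[OF xzy] S by simp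
qed

lemma msqrt_herm2:
  assumes "psd (herm2 a d q)"
  shows "msqrt (herm2 a d q) = herm2_sqrt a d q"
  unfolding msqrt_def
proof (rule the_equality)
  show "psd (herm2_sqrt a d q) \<and> dim_row (herm2_sqrt a d q) = dim_row (herm2 a d q)
      \<and> herm2_sqrt a d q * herm2_sqrt a d q = herm2 a d q"
    using psd_herm2_sqrt[OF assms] herm2_sqrt_square[OF assms] by (simp add: herm2_sqrt_def Let_def)
qed (auto intro: psd_square_root_unique_dim2)

lemma mtrace_msqrt_dim2:
  assumes "psd M" "dim_row M = 2"
  shows "mtrace (msqrt M) = of_real (sqrt (Re (mtrace M) + 2 * sqrt (Re (det2 M))))"
proof -
  obtain a d q where M: "M = herm2 a d q" and adq: "0 \<le> a" "0 \<le> d" "(cmod q)^2 \<le> a * d"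
    using psd_dim2E[OF assms] by metis
  define \<rho> where "\<rho> = sqrt (a * d - (cmod q)^2)"
  define t where "t = sqrt (a + d + 2 * \<rho>)"
  have "(a + \<rho>) / t + (d + \<rho>) / t = (a + d + 2 * \<rho>) / t"
    by (simp add: add_divide_distrib)
  also have "\<dots> = t"
    unfolding t_def using adq by (intro real_div_sqrt) (simp add: \<rho>_def)
  finally have "(a + \<rho>) / t + (d + \<rho>) / t = t" .
  moreover have "mtrace (msqrt M) = of_real ((a + \<rho>) / t + (d + \<rho>) / t)"
    using assms(1) unfolding M msqrt_herm2[OF assms(1)[unfolded M]]
    by (simp add: herm2_sqrt_def Let_def mtrace_herm2 \<rho>_def t_def)
  ultimately show ?thesis
    unfolding M mtrace_herm2 det2_herm2 by (simp add: t_def \<rho>_def)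
qed

lemma psd_congruence_dim2:
  assumes S: "psd S" "dim_row S = 2" and B: "psd B" "dim_row B = 2"
  shows "psd (S * B * S)"
proof -
  obtain x z y where S_eq: "S = herm2 x z y"
    using psd_dim2E[OF S] by metis
  obtain b1 b2 c where B_eq: "B = herm2 b1 b2 c" and b: "0 \<le> b1" "0 \<le> b2" "(cmod c)^2 \<le> b1 * b2"
    using psd_dim2E[OF B] by metis
  define m where "m = (of_real x * of_real b1 + y * cnj c) * y + (of_real x * c + y * of_real b2) * of_real z"
  define m0 m1 where "m0 = herm2_qform b1 b2 c x (cnj y)" and "m1 = herm2_qform b1 b2 c y z"
  have SBS: "S * B * S = herm2 m0 m1 m"
    unfolding S_eq B_eq m_def m0_def m1_def herm2_def mat2_mult mat2_eq_iff herm2_qform_def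
    by (simp add: complex_eq_iff cmod_power2) (simp add: algebra_simps power2_eq_square)
  have "of_real (m0 * m1 - (cmod m)^2) = det2 S * det2 B * det2 S"
    unfolding det2_herm2[symmetric] SBS[symmetric] S_eq B_eq
    using det2_mult[OF mult_carrier_mat[OF herm2_carrier(1) herm2_carrier(1)] herm2_carrier(1)]
    by (simp add: det2_mult)
  also have "\<dots> = of_real ((x * z - (cmod y)^2)^2 * (b1 * b2 - (cmod c)^2))"
    unfolding S_eq B_eq det2_herm2 by (simp add: power2_eq_square)
  finally have "m0 * m1 - (cmod m)^2 = (x * z - (cmod y)^2)^2 * (b1 * b2 - (cmod c)^2)"
    by (simp only: of_real_eq_iff)
  moreover have "0 \<le> (x * z - (cmod y)^2)^2 * (b1 * b2 - (cmod c)^2)"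
    using b by simp
  moreover have "0 \<le> m0" "0 \<le> m1"
    unfolding m0_def m1_def using b by (simp_all add: herm2_qform_nonneg)
  ultimately show ?thesis
    unfolding SBS psd_herm2_iff by linarith
qed

lemma psd_carrier_mat: "psd A \<Longrightarrow> A \<in> carrier_mat (dim_row A) (dim_row A)"
  unfolding psd_def by blast

lemma msqrt_dim2:
  assumes "psd A" "dim_row A = 2"
  shows "psd (msqrt A)" "dim_row (msqrt A) = 2" "msqrt A * msqrt A = A"
proof -
  obtain a d q where A: "A = herm2 a d q"
    using psd_dim2E[OF assms] by metis
  show "psd (msqrt A)" "dim_row (msqrt A) = 2" "msqrt A * msqrt A = A"
    using psd_herm2_sqrt herm2_sqrt_square msqrt_herm2 assms(1) unfolding A
    by (simp_all add: herm2_sqrt_def Let_def)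
qed

lemma Im_det2_psd:
  assumes "psd A" "dim_row A = 2"
  shows "Im (det2 A) = 0"
  using psd_dim2E[OF assms] by (metis det2_herm2 Im_complex_of_real)

lemma fidelity_dim2:
  assumes A: "psd A" "dim_row A = 2" and B: "psd B" "dim_row B = 2"
  shows "fidelity A B = sqrt (Re (mtrace (A * B)) + 2 * sqrt (Re (det2 A) * Re (det2 B)))"
proof -
  define S where "S = msqrt A"
  have S: "psd S" "dim_row S = 2" "S * S = A"
    using msqrt_dim2[OF A] by (simp_all add: S_def)
  have carr: "S \<in> carrier_mat 2 2" "B \<in> carrier_mat 2 2"
    using S(1,2) B psd_carrier_mat by metis+
  have "mtrace (S * B * S) = mtrace (S * (S * B))"
    using carr by (intro mtrace_mult_commute) auto
  also have "\<dots> = mtrace (A * B)"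
    using assoc_mult_mat[OF carr(1) carr(1) carr(2)] S(3) by simp
  finally have tr: "mtrace (S * B * S) = mtrace (A * B)" .
  have "det2 (S * B * S) = det2 (S * S) * det2 B"
    using carr by (simp add: det2_mult mult_carrier_mat[of _ 2 2])
  then have det: "Re (det2 (S * B * S)) = Re (det2 A) * Re (det2 B)"
    using Im_det2_psd[OF A] S(3) by simp
  have "psd (S * B * S)" "dim_row (S * B * S) = 2"
    using psd_congruence_dim2[OF S(1,2) B] S(2) by simp_all
  from mtrace_msqrt_dim2[OF this] show ?thesis
    unfolding fidelity_def S_def[symmetric] tr det by simp
qed

lemma psd_trace_zero_dim2:
  assumes "psd A" "dim_row A = 2" "mtrace A = 0"
  shows "A = herm2 0 0 0"
proof -
  obtain a d q where A: "A = herm2 a d q" and adq: "0 \<le> a" "0 \<le> d" "(cmod q)^2 \<le> a * d"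
    using psd_dim2E[OF assms(1,2)] by metis
  from assms(3) have "a + d = 0"
    unfolding A mtrace_herm2 by (simp del: of_real_add)
  with adq have "a = 0" "d = 0"
    by simp_all
  with adq have "q = 0"
    by simp
  with A \<open>a = 0\<close> \<open>d = 0\<close> show ?thesis
    by simp
qed

(* A positive matrix of trace zero vanishes, and then the fidelity is 0 anyway. *)
lemma comp_fid_dim2:
  assumes A: "psd A" "dim_row A = 2" and B: "psd B" "dim_row B = 2"
  shows "comp_fid A B = fidelity A B"
proof -
  have zero: "herm2 0 0 0 = 0\<^sub>m 2 2"
    by (rule eq_matI) (auto simp: herm2_def mat2_def)
  have "fidelity A B = 0" if "mtrace A = 0 \<or> mtrace B = 0"
  proof -
    have carr: "A \<in> carrier_mat 2 2" "B \<in> carrier_mat 2 2"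
      using A B psd_carrier_mat by metis+
    from that have "A = 0\<^sub>m 2 2 \<or> B = 0\<^sub>m 2 2"
      using psd_trace_zero_dim2[OF A] psd_trace_zero_dim2[OF B] zero by metis
    then show ?thesis
      unfolding fidelity_dim2[OF A B] using carr by (auto simp: mtrace_def det2_def)
  qed
  then show ?thesis
    by (simp add: comp_fid_def)
qed

lemma comp_fid_rank_one:
  assumes uv: "0 \<le> u" "0 \<le> v" "(cmod w)^2 = u * v"
    and abc: "0 \<le> \<alpha>" "0 \<le> \<beta>" "\<gamma>^2 \<le> \<alpha> * \<beta>"
  shows "comp_fid (herm2 (u * \<alpha>) (v * \<beta>) (w * of_real \<gamma>)) (herm2 (u / 2) (v / 2) (w / 2))
    = sqrt ((u^2 * \<alpha> + v^2 * \<beta>) / 2 + u * v * \<gamma>)"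
proof -
  have "(cmod (w * of_real \<gamma>))^2 = u * v * \<gamma>^2"
    using uv by (simp add: norm_mult power_mult_distrib)
  also have "\<dots> \<le> (u * \<alpha>) * (v * \<beta>)"
    using uv abc mult_left_mono[OF abc(3), of "u * v"] by (simp add: algebra_simps)
  finally have A: "psd (herm2 (u * \<alpha>) (v * \<beta>) (w * of_real \<gamma>))"
    using uv abc by (simp add: psd_herm2_iff)
  have B: "psd (herm2 (u / 2) (v / 2) (w / 2))" and det: "Re (det2 (herm2 (u / 2) (v / 2) (w / 2))) = 0"
    using uv by (simp_all add: psd_herm2_iff det2_herm2 norm_divide power_divide)
  have "Re (w * of_real \<gamma> * cnj (w / 2)) = \<gamma> * (cmod w)^2 / 2"
    by (simp add: cmod_power2) (simp add: power2_eq_square algebra_simps)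
  also have "\<dots> = u * v * \<gamma> / 2"
    using uv(3) by simp
  finally have "Re (mtrace (herm2 (u * \<alpha>) (v * \<beta>) (w * of_real \<gamma>) * herm2 (u / 2) (v / 2) (w / 2)))
      = (u^2 * \<alpha> + v^2 * \<beta>) / 2 + u * v * \<gamma>"
    unfolding mtrace_herm2_mult by (simp add: power2_eq_square field_simps)
  then show ?thesis
    using comp_fid_dim2[OF A _ B] fidelity_dim2[OF A _ B] det by simp
qed

lemma bloch_eigenvector_offdiag:
  fixes n l :: real
  assumes l: "l^2 = 1" and unit: "(cmod x)^2 + (cmod y)^2 = 1"
    and E1: "of_real n * x + q * y = of_real l * x" and E2: "cnj q * x - of_real n * y = of_real l * y"
  shows "x * cnj y = of_real l * q / 2"
proof -
  have "q * (x * cnj x) = of_real (l + n) * (x * cnj y)"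
    using arg_cong[OF E2, of "\<lambda>z. x * cnj z"] by (simp add: algebra_simps)
  moreover have "q * (y * cnj y) = of_real (l - n) * (x * cnj y)"
    using arg_cong[OF E1, of "\<lambda>z. z * cnj y"] by (simp add: algebra_simps)
  ultimately have "q * of_real ((cmod x)^2 + (cmod y)^2) = of_real (2 * l) * (x * cnj y)"
    by (simp add: algebra_simps flip: complex_norm_square)
  then have "of_real l * q = of_real (2 * l^2) * (x * cnj y)"
    unfolding unit by (simp add: power2_eq_square)
  then show ?thesis
    using l by simp
qed

lemma bloch_eigenvector_diag:
  fixes n l :: real
  assumes bloch: "n^2 + (cmod q)^2 = 1" and l: "l^2 = 1" and unit: "(cmod x)^2 + (cmod y)^2 = 1"
    and E1: "of_real n * x + q * y = of_real l * x" and E2: "cnj q * x - of_real n * y = of_real l * y"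
  shows "(cmod x)^2 = (1 + l * n) / 2"
proof -
  have l_cases: "l = 1 \<or> l = -1"
    using l by (simp add: power2_eq_1_iff)
  have xx: "x * cnj x = of_real ((cmod x)^2)"
    by (rule complex_norm_square[symmetric])
  have "of_real (l - n) * (x * cnj x) = q * (y * cnj x)"
    using arg_cong[OF E1, of "\<lambda>z. z * cnj x"] by (simp add: algebra_simps)
  then have "of_real ((cmod x)^2 * (l - n)) = q * (y * cnj x)"
    unfolding xx by (simp add: mult.commute)
  also have "y * cnj x = cnj (x * cnj y)"
    by simp
  also have "q * \<dots> = of_real (l * (cmod q)^2 / 2)"
    unfolding bloch_eigenvector_offdiag[OF l unit E1 E2] by (simp add: mult.commute flip: complex_norm_square)
  finally have "(cmod x)^2 * (l - n) = l * (cmod q)^2 / 2"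
    by (simp only: of_real_eq_iff)
  moreover have "(cmod q)^2 = 1 - n^2"
    using bloch by simp
  ultimately have "(cmod x)^2 * (l - n) = l * (1 - n^2) / 2"
    by simp
  with l_cases have key: "(cmod x)^2 * (1 - l * n) = (1 + l * n) * (1 - l * n) / 2"
    by (auto simp: algebra_simps power2_eq_square)
  show ?thesis
  proof (cases "l * n = 1")
    case False
    with key show ?thesis
      by simp
  next
    case True
    with l_cases have "n = l"
      by auto
    with bloch l have "q = 0"
      by simp
    with E2 \<open>n = l\<close> l_cases have "y = 0"
      by auto
    with unit True show ?thesis
      by simp
  qed
qed

lemma outer_bloch_eigenvector:
  fixes n l :: real
  assumes "n^2 + (cmod q)^2 = 1" "l^2 = 1"
    and v: "v \<in> carrier_vec 2" "(\<Sum>i<2. cmod (v $ i)^2) = 1" "herm2 n (-n) q *\<^sub>v v = of_real l \<cdot>\<^sub>v v"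
  shows "mat 2 2 (\<lambda>(i, j). v $ i * cnj (v $ j)) = herm2 ((1 + l * n) / 2) ((1 - l * n) / 2) (of_real l * q / 2)"
proof -
  define x y where "x = v$0" and "y = v$1"
  have v_eq: "v = vec2 x y"
    unfolding x_def y_def using v(1) by (rule vec2_eta)
  have eig: "of_real n * x + q * y = of_real l * x" "cnj q * x - of_real n * y = of_real l * y"
    using v(3) unfolding v_eq herm2_mult_vec2 smult_vec2 vec2_eq_iff by simp_all
  have unit: "(cmod x)^2 + (cmod y)^2 = 1"
    using v(2) by (simp add: v_eq sum_lessThan_2)
  note xy = bloch_eigenvector_offdiag[OF assms(2) unit eig]
  have "y * cnj x = cnj (of_real l * q / 2)"
    using xy by (metis complex_cnj_cnj complex_cnj_mult mult.commute)
  moreover have "(cmod x)^2 = (1 + l * n) / 2" "(cmod y)^2 = (1 - l * n) / 2"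
    using bloch_eigenvector_diag[OF assms(1,2) unit eig] unit by simp_all
  then have "x * cnj x = of_real ((1 + l * n) / 2)" "y * cnj y = of_real ((1 - l * n) / 2)"
    by (metis complex_norm_square)+
  ultimately show ?thesis
    using xy unfolding v_eq by (intro eq_matI) (auto simp: herm2_def mat2_def less_2_iff)
qed

lemma bloch_eigenvector:
  fixes n l :: real
  assumes bloch: "n^2 + (cmod q)^2 = 1" and l: "l^2 = 1"
  shows "herm2 n (-n) q *\<^sub>v vec2 (of_real (1 + l * n)) (of_real l * cnj q)
    = of_real l \<cdot>\<^sub>v vec2 (of_real (1 + l * n)) (of_real l * cnj q)"
proof -
  have "n * (1 + l * n) + l * (cmod q)^2 = n + l * (n^2 + (cmod q)^2)"
    by (simp add: power2_eq_square algebra_simps)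
  also have "\<dots> = l * (1 + l * n)"
    using bloch l by (simp add: power2_eq_square algebra_simps)
  finally have "complex_of_real (n * (1 + l * n) + l * (cmod q)^2) = of_real (l * (1 + l * n))"
    by (simp only:)
  moreover have "of_real n * of_real (1 + l * n) + q * (of_real l * cnj q)
      = complex_of_real (n * (1 + l * n) + l * (cmod q)^2)"
    by (simp add: algebra_simps flip: complex_norm_square)
  ultimately have "of_real n * of_real (1 + l * n) + q * (of_real l * cnj q) = of_real l * of_real (1 + l * n)"
    by simp
  moreover have "of_real l * of_real l = (1::complex)"
    using l by (simp add: power2_eq_square flip: of_real_mult)
  ultimately show ?thesis
    unfolding herm2_mult_vec2 smult_vec2 vec2_eq_iff by (simp add: algebra_simps)
qed

lemma bloch_eigenvector_norm:
  fixes n l :: real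
  assumes "n^2 + (cmod q)^2 = 1" "l^2 = 1"
  shows "(1 + l * n)^2 + (cmod q)^2 = 2 * (1 + l * n)"
proof -
  have "(1 + l * n)^2 + (cmod q)^2 = 1 + 2 * l * n + (n^2 + (cmod q)^2)"
    using assms(2) by (simp add: power2_sum power_mult_distrib)
  then show ?thesis
    using assms(1) by simp
qed

lemma bloch_unit_eigenvector_exists:
  fixes n l :: real
  assumes bloch: "n^2 + (cmod q)^2 = 1" and l: "l^2 = 1"
  shows "\<exists>v. v \<in> carrier_vec 2 \<and> (\<Sum>i<2. cmod (v $ i)^2) = 1 \<and> herm2 n (-n) q *\<^sub>v v = of_real l \<cdot>\<^sub>v v"
proof -
  have norm: "(1 + l * n)^2 + (cmod q)^2 = 2 * (1 + l * n)"
    using bloch l by (rule bloch_eigenvector_norm)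
  have "0 \<le> 2 * (1 + l * n)"
    unfolding norm[symmetric] by simp
  then have "0 \<le> 1 + l * n"
    by simp
  show ?thesis
  proof (cases "1 + l * n = 0")
    case True
    with norm have "q = 0"
      by simp
    from True l have "n = - l"
      by (auto simp: power2_eq_1_iff)
    with \<open>q = 0\<close> have "herm2 n (-n) q *\<^sub>v vec2 0 1 = of_real l \<cdot>\<^sub>v vec2 0 1"
      unfolding herm2_mult_vec2 smult_vec2 vec2_eq_iff by simp
    then show ?thesis
      using vec2_simps(1) by (intro exI[of _ "vec2 0 1"]) (simp add: sum_lessThan_2)
  next
    case False
    define c where "c = 1 / sqrt (2 * (1 + l * n))"
    define u where "u = vec2 (of_real (1 + l * n)) (of_real l * cnj q)"
    define v where "v = of_real c \<cdot>\<^sub>v u"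
    have "herm2 n (-n) q *\<^sub>v v = of_real c \<cdot>\<^sub>v (herm2 n (-n) q *\<^sub>v u)"
      unfolding v_def u_def by (rule mult_mat_vec[OF herm2_carrier(1) vec2_simps(1)])
    also have "\<dots> = of_real l \<cdot>\<^sub>v v"
      unfolding u_def bloch_eigenvector[OF bloch l] v_def by (simp only: smult_smult_assoc mult.commute)
    finally have "herm2 n (-n) q *\<^sub>v v = of_real l \<cdot>\<^sub>v v" .
    moreover have "(\<Sum>i<2. cmod (v $ i)^2) = c^2 * ((1 + l * n)^2 + (cmod q)^2)"
      using l by (simp add: v_def u_def smult_vec2 sum_lessThan_2 norm_mult power_mult_distrib distrib_left
          del: of_real_add)
    then have "(\<Sum>i<2. cmod (v $ i)^2) = 1"
      unfolding norm using False \<open>0 \<le> 1 + l * n\<close> by (simp add: c_def power_divide)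
    moreover have "v \<in> carrier_vec 2"
      by (simp add: v_def u_def)
    ultimately show ?thesis
      by blast
  qed
qed

(* For the Bloch vector n of measurement x: bloch_z x = n_z and bloch_xy x = n_x - i n_y.
   As in pauli, every x >= 2 stands for sigma_z. *)
definition bloch_z :: "nat \<Rightarrow> real" where
  "bloch_z x = (if x < 2 then 0 else 1)"

definition bloch_xy :: "nat \<Rightarrow> complex" where
  "bloch_xy x = (if x = 0 then 1 else if x = 1 then - \<i> else 0)"

lemma pauli_eq_herm2: "pauli x = herm2 (bloch_z x) (- bloch_z x) (bloch_xy x)"
  by (rule eq_matI)
     (auto simp: pauli_def herm2_def mat2_def bloch_z_def bloch_xy_def mat_of_rows_list_def less_2_iff)

lemma bloch_unit: "(bloch_z x)^2 + (cmod (bloch_xy x))^2 = 1"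
  by (simp add: bloch_z_def bloch_xy_def)

(* Entries of P_{a|x} = (1 + (-1)^a sigma_x) / 2. *)
definition proj_diag :: "nat \<Rightarrow> nat \<Rightarrow> nat \<Rightarrow> real" where
  "proj_diag k a x = (1 + (-1)^(k + a) * bloch_z x) / 2"

definition proj_offdiag :: "nat \<Rightarrow> nat \<Rightarrow> complex" where
  "proj_offdiag a x = (-1)^a * bloch_xy x / 2"

(* proj chooses some unit eigenvector; its outer product does not depend on the choice. *)
lemma proj_eq_herm2: "proj a x = herm2 (proj_diag 0 a x) (proj_diag 1 a x) (proj_offdiag a x)"
proof -
  define l :: real where "l = (-1)^a"
  have l: "l^2 = 1"
    by (simp add: l_def flip: power_mult)
  have sign: "(-1::complex)^a = of_real l"
    by (simp add: l_def)
  define P where "P v \<longleftrightarrow> v \<in> carrier_vec 2 \<and> (\<Sum>i<2. cmod (v $ i)^2) = 1 \<and> pauli x *\<^sub>v v = (-1)^a \<cdot>\<^sub>v v"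
    for v
  have "\<exists>v. P v"
    using bloch_unit_eigenvector_exists[OF bloch_unit l] by (simp add: P_def pauli_eq_herm2 sign)
  then have "P (SOME v. P v)"
    by (rule someI_ex)
  then have "proj a x = herm2 ((1 + l * bloch_z x) / 2) ((1 - l * bloch_z x) / 2) (of_real l * bloch_xy x / 2)"
    using outer_bloch_eigenvector[OF bloch_unit l]
    by (simp add: proj_def P_def[abs_def] pauli_eq_herm2 sign Let_def)
  then show ?thesis
    by (simp add: proj_diag_def proj_offdiag_def l_def)
qed

lemma ket_ghz_eq_gghz: "ket_ghz = ket_gghz (pi / 4)"
proof -
  have half: "sqrt 2 / 2 = 1 / sqrt 2"
    by (simp add: field_simps)
  show ?thesis
    unfolding ket_ghz_def ket_gghz_def cos_45 sin_45 half by (intro ext) auto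
qed

(* joint_weight k a b x y = <kk| P_{a|x} (x) P_{b|y} |kk> and
   joint_coherence a b x y = <11| P_{a|x} (x) P_{b|y} |00>. *)
definition joint_weight :: "nat \<Rightarrow> nat \<Rightarrow> nat \<Rightarrow> nat \<Rightarrow> nat \<Rightarrow> real" where
  "joint_weight k a b x y = proj_diag k a x * proj_diag k b y"

definition joint_coherence :: "nat \<Rightarrow> nat \<Rightarrow> nat \<Rightarrow> nat \<Rightarrow> complex" where
  "joint_coherence a b x y = cnj (proj_offdiag a x * proj_offdiag b y)"

lemma assemblage_gghz:
  "assemblage (ket_gghz \<theta>) a b x y =
     herm2 (joint_weight 0 a b x y * (cos \<theta>)^2) (joint_weight 1 a b x y * (sin \<theta>)^2)
       (joint_coherence a b x y * of_real (cos \<theta> * sin \<theta>))"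
  unfolding assemblage_def proj_eq_herm2 joint_weight_def joint_coherence_def
  by (rule eq_matI)
     (auto simp: ptrace_AB_def mult3_def tensor3_def dens3_def ket_gghz_def herm2_def mat2_def
       sum_lessThan_2 less_2_iff power2_eq_square)

lemma proj_diag_nonneg: "0 \<le> proj_diag k a x"
  by (cases "even (k + a)") (auto simp: proj_diag_def bloch_z_def)

lemma cmod_proj_offdiag: "(cmod (proj_offdiag a x))^2 = proj_diag 0 a x * proj_diag 1 a x"
proof -
  have "(cmod (proj_offdiag a x))^2 = (1 - (bloch_z x)^2) / 4"
    using bloch_unit[of x] by (simp add: proj_offdiag_def norm_mult norm_divide norm_power power_divide)
  also have "\<dots> = proj_diag 0 a x * proj_diag 1 a x"
    by (cases "even a") (auto simp: proj_diag_def power2_eq_square field_simps)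
  finally show ?thesis .
qed

lemma joint_weight_nonneg: "0 \<le> joint_weight k a b x y"
  by (simp add: joint_weight_def proj_diag_nonneg)

lemma cmod_joint_coherence:
  "(cmod (joint_coherence a b x y))^2 = joint_weight 0 a b x y * joint_weight 1 a b x y"
  by (simp add: joint_coherence_def joint_weight_def norm_mult power_mult_distrib cmod_proj_offdiag)

lemma assemblage_ghz:
  "assemblage ket_ghz a b x y =
     herm2 (joint_weight 0 a b x y / 2) (joint_weight 1 a b x y / 2) (joint_coherence a b x y / 2)"
proof -
  have "(sqrt 2 / 2)^2 = (1 / 2 :: real)"
    by (simp add: power_divide)
  then show ?thesis
    by (simp add: ket_ghz_eq_gghz assemblage_gghz cos_45 sin_45 power2_eq_square)
qed

(* The entries <000|rho|000>, <111|rho|111> and <000|rho|111> of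
   rho = P_success |GHZ><GHZ| + P_fail |GGHZ><GGHZ|. *)
definition rho_000 :: "real \<Rightarrow> nat \<Rightarrow> real" where
  "rho_000 \<theta> N = P_success \<theta> N / 2 + P_fail \<theta> N * (cos \<theta>)^2"

definition rho_111 :: "real \<Rightarrow> nat \<Rightarrow> real" where
  "rho_111 \<theta> N = P_success \<theta> N / 2 + P_fail \<theta> N * (sin \<theta>)^2"

definition rho_coh :: "real \<Rightarrow> nat \<Rightarrow> real" where
  "rho_coh \<theta> N = P_success \<theta> N / 2 + P_fail \<theta> N * (cos \<theta> * sin \<theta>)"

lemma sigma_dist_herm2:
  "sigma_dist \<theta> N a b x y =
     herm2 (joint_weight 0 a b x y * rho_000 \<theta> N) (joint_weight 1 a b x y * rho_111 \<theta> N)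
       (joint_coherence a b x y * of_real (rho_coh \<theta> N))"
  unfolding sigma_dist_def assemblage_ghz assemblage_gghz smult_herm2 herm2_add herm2_eq_iff
  by (simp add: rho_000_def rho_111_def rho_coh_def algebra_simps)

lemma mixture_coherence_bound:
  fixes p q c s :: real
  assumes "0 \<le> p" "0 \<le> q"
  shows "(p / 2 + q * (c * s))^2 \<le> (p / 2 + q * c^2) * (p / 2 + q * s^2)"
proof -
  have "(p / 2 + q * c^2) * (p / 2 + q * s^2) - (p / 2 + q * (c * s))^2 = p * q * (c - s)^2 / 2"
    by (simp add: power2_eq_square field_simps)
  moreover have "0 \<le> p * q * (c - s)^2 / 2"
    using assms by simp
  ultimately show ?thesis
    by linarith
qed

lemma rho_psd:
  assumes "0 < \<theta>" "\<theta> < pi / 4"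
  shows "0 \<le> rho_000 \<theta> N" "0 \<le> rho_111 \<theta> N" "(rho_coh \<theta> N)^2 \<le> rho_000 \<theta> N * rho_111 \<theta> N"
proof -
  have "0 < cos (2 * \<theta>)"
    using assms by (intro cos_gt_zero_pi) auto
  then have "0 \<le> P_fail \<theta> N" "0 \<le> P_success \<theta> N"
    by (simp_all add: P_success_def P_fail_def cos_double_sin power_le_one)
  then show "0 \<le> rho_000 \<theta> N" "0 \<le> rho_111 \<theta> N" "(rho_coh \<theta> N)^2 \<le> rho_000 \<theta> N * rho_111 \<theta> N"
    unfolding rho_000_def rho_111_def rho_coh_def by (simp_all add: mixture_coherence_bound)
qed

lemma component_fidelity:
  assumes "0 < \<theta>" "\<theta> < pi / 4"
  shows "comp_fid (sigma_dist \<theta> N a b x y) (assemblage ket_ghz a b x y)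
    = sqrt (((joint_weight 0 a b x y)^2 * rho_000 \<theta> N + (joint_weight 1 a b x y)^2 * rho_111 \<theta> N) / 2
        + joint_weight 0 a b x y * joint_weight 1 a b x y * rho_coh \<theta> N)"
  unfolding sigma_dist_herm2 assemblage_ghz
  by (rule comp_fid_rank_one[OF joint_weight_nonneg joint_weight_nonneg cmod_joint_coherence rho_psd[OF assms]])

lemma proj_diag_xy: "x < 2 \<Longrightarrow> proj_diag k a x = 1 / 2"
  by (simp add: proj_diag_def bloch_z_def)

lemma proj_diag_z: "proj_diag k a 2 = (if even (k + a) then 1 else 0)"
  by (simp add: proj_diag_def bloch_z_def)

lemma joint_weight_xy: "x < 2 \<Longrightarrow> y < 2 \<Longrightarrow> joint_weight k a b x y = 1 / 4"
  by (simp add: joint_weight_def proj_diag_xy)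

lemma sqrt_divide_square: "0 \<le> c \<Longrightarrow> sqrt (X / c^2) = sqrt X / c"
  by (simp only: real_sqrt_divide real_sqrt_abs abs_of_nonneg)

lemma setting_sum_xy:
  assumes "x < 2" "y < 2"
  shows "(\<Sum>a<2. \<Sum>b<2. sqrt (((joint_weight 0 a b x y)^2 * \<alpha> + (joint_weight 1 a b x y)^2 * \<beta>) / 2
      + joint_weight 0 a b x y * joint_weight 1 a b x y * \<gamma>)) = sqrt ((\<alpha> + \<beta> + 2 * \<gamma>) / 2)"
proof -
  define X where "X = (\<alpha> + \<beta> + 2 * \<gamma>) / 2"
  have arg: "((joint_weight 0 a b x y)^2 * \<alpha> + (joint_weight 1 a b x y)^2 * \<beta>) / 2
      + joint_weight 0 a b x y * joint_weight 1 a b x y * \<gamma> = X / 4^2" for a b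
    using assms by (simp add: joint_weight_xy X_def field_simps)
  have summand: "sqrt (((joint_weight 0 a b x y)^2 * \<alpha> + (joint_weight 1 a b x y)^2 * \<beta>) / 2
      + joint_weight 0 a b x y * joint_weight 1 a b x y * \<gamma>) = sqrt X / 4" for a b
    by (simp only: arg sqrt_divide_square[OF zero_le_numeral])
  show ?thesis
    unfolding X_def[symmetric] summand by (simp add: sum_lessThan_2)
qed

lemma setting_sum_z:
  assumes "x < 3" "y < 3" "\<not> (x < 2 \<and> y < 2)"
  shows "(\<Sum>a<2. \<Sum>b<2. sqrt (((joint_weight 0 a b x y)^2 * \<alpha> + (joint_weight 1 a b x y)^2 * \<beta>) / 2
      + joint_weight 0 a b x y * joint_weight 1 a b x y * \<gamma>)) = sqrt (\<alpha> / 2) + sqrt (\<beta> / 2)"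
proof -
  have half: "2 * sqrt ((1/2)^2 * X / 2) = sqrt (X / 2)" for X :: real
  proof -
    have arg: "(1/2)^2 * X / 2 = (X / 2) / 2^2"
      by (simp add: power2_eq_square)
    show ?thesis
      unfolding arg sqrt_divide_square[OF zero_le_numeral] by simp
  qed
  consider "x = 2" "y = 2" | "x = 2" "y < 2" | "x < 2" "y = 2"
    using assms by linarith
  then show ?thesis
    by cases (simp_all add: joint_weight_def proj_diag_xy proj_diag_z sum_lessThan_2 half)
qed

lemma sqrt_mean_le_sum_sqrt:
  assumes "0 \<le> \<alpha>" "0 \<le> \<beta>" "\<gamma>^2 \<le> \<alpha> * \<beta>"
  shows "sqrt ((\<alpha> + \<beta> + 2 * \<gamma>) / 2) \<le> sqrt (\<alpha> / 2) + sqrt (\<beta> / 2)"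
proof -
  have "\<gamma> \<le> sqrt (\<alpha> * \<beta>)"
    using assms by (simp add: real_le_rsqrt)
  also have "sqrt (\<alpha> * \<beta>) = 2 * (sqrt (\<alpha> / 2) * sqrt (\<beta> / 2))"
    using sqrt_divide_square[of 2 "\<alpha> * \<beta>"] by (simp add: real_sqrt_mult[symmetric])
  finally have "(\<alpha> + \<beta> + 2 * \<gamma>) / 2 \<le> (sqrt (\<alpha> / 2) + sqrt (\<beta> / 2))^2"
    using assms by (simp add: power2_sum)
  then have "sqrt ((\<alpha> + \<beta> + 2 * \<gamma>) / 2) \<le> sqrt ((sqrt (\<alpha> / 2) + sqrt (\<beta> / 2))^2)"
    by (rule real_sqrt_le_mono)
  also have "\<dots> = sqrt (\<alpha> / 2) + sqrt (\<beta> / 2)"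
    using assms by simp
  finally show ?thesis .
qed

lemma rho_sum:
  "(rho_000 \<theta> N + rho_111 \<theta> N + 2 * rho_coh \<theta> N) / 2 = 1 - 1/2 * (1 - sin (2 * \<theta>)) * P_fail \<theta> N"
proof -
  have "rho_000 \<theta> N + rho_111 \<theta> N = P_success \<theta> N + P_fail \<theta> N * ((cos \<theta>)^2 + (sin \<theta>)^2)"
    unfolding rho_000_def rho_111_def distrib_left by simp
  then have "rho_000 \<theta> N + rho_111 \<theta> N = 1"
    by (simp add: P_success_def)
  moreover have "rho_coh \<theta> N = (1 - P_fail \<theta> N) / 2 + P_fail \<theta> N * (cos \<theta> * sin \<theta>)"
    by (simp add: rho_coh_def P_success_def)
  ultimately show ?thesis
    unfolding sin_double by (simp add: field_simps)
qed

lemma P_fail_eq: "P_fail \<theta> N = (cos (2 * \<theta>))^(N - 1)"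
  by (simp add: P_fail_def cos_double_sin)

lemma setting_fidelity:
  assumes "0 < \<theta>" "\<theta> < pi / 4" "x < 3" "y < 3"
  shows "(\<Sum>a<2. \<Sum>b<2. comp_fid (sigma_dist \<theta> N a b x y) (assemblage ket_ghz a b x y))
    = (if x < 2 \<and> y < 2 then sqrt ((rho_000 \<theta> N + rho_111 \<theta> N + 2 * rho_coh \<theta> N) / 2)
       else sqrt (rho_000 \<theta> N / 2) + sqrt (rho_111 \<theta> N / 2))"
  unfolding component_fidelity[OF assms(1,2)] using setting_sum_xy setting_sum_z assms(3,4) by simp

theorem theorem2:
  fixes \<theta> :: real and N :: nat
  assumes "0 < \<theta>" and "\<theta> < pi / 4" and "N \<ge> 2"
  shows "assemblage_fidelity (sigma_dist \<theta> N) (assemblage ket_ghz)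
           = sqrt (1 - 1/2 * (1 - sin (2 * \<theta>)) * (cos (2 * \<theta>)) ^ (N - 1))"
proof -
  define V1 where "V1 = sqrt ((rho_000 \<theta> N + rho_111 \<theta> N + 2 * rho_coh \<theta> N) / 2)"
  define V2 where "V2 = sqrt (rho_000 \<theta> N / 2) + sqrt (rho_111 \<theta> N / 2)"
  let ?F = "\<lambda>(x, y). \<Sum>a<2. \<Sum>b<2. comp_fid (sigma_dist \<theta> N a b x y) (assemblage ket_ghz a b x y)"
  have F: "?F (x, y) = (if x < 2 \<and> y < 2 then V1 else V2)" if "x < 3" "y < 3" for x y
    using setting_fidelity[OF assms(1,2) that] by (simp add: V1_def V2_def)
  have "?F ` ({..<3} \<times> {..<3}) = {V1, V2}"
  proof
    show "?F ` ({..<3} \<times> {..<3}) \<subseteq> {V1, V2}"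
      using F by auto
    have "V1 = ?F (0, 0)" "V2 = ?F (2, 2)"
      using F by simp_all
    then show "{V1, V2} \<subseteq> ?F ` ({..<3} \<times> {..<3})"
      by auto
  qed
  moreover have "V1 \<le> V2"
    unfolding V1_def V2_def using rho_psd[OF assms(1,2)] by (rule sqrt_mean_le_sum_sqrt)
  ultimately have "assemblage_fidelity (sigma_dist \<theta> N) (assemblage ket_ghz) = V1"
    unfolding assemblage_fidelity_def by (simp add: min_def)
  then show ?thesis
    unfolding V1_def rho_sum P_fail_eq .
qed

end
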